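(* Let $n,k\ge 1$ and let $\varphi$ be a tame automorphism of $\mathbf{C}[x_1,\dots,x_{n+k}]$. Partition the indices $\{1,\dots,n+k\}$ into $\{i_1,\dots,i_n\}$ and $\{j_1,\dots,j_k\}$. For polynomials $q_1,\dots,q_k\in\mathbf{C}[x_{i_1},\dots,x_{i_n}]$, let $\varphi_{q_1,\dots,q_k}$ be the $\mathbf{C}$-algebra endomorphism of $\mathbf{C}[x_{i_1},\dots,x_{i_n}]$ sending each $x_{i_l}$ ($1\le l\le n$) to the polynomial obtained from $\varphi(x_{i_l})$ by substituting $q_m$ for $x_{j_m}$, $1\le m\le k$. Then there exist polynomials $q_1,\dots,q_k\in\mathbf{C}[x_{i_1},\dots,x_{i_n}]$ such that $\varphi_{q_1,\dots,q_k}$ is injective.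
   Context: An automorphism of $\mathbf{C}[x_1,\dots,x_N]$ is elementary if it fixes all variables except one, $x_i$, and maps $x_i$ to $x_i + f(x_1,\dots,x_{i-1},x_{i+1},\dots,x_N)$; it is tame if it is a composition of elementary and linear automorphisms. *)

theory Defs
  imports Complex_Main "HOL-Library.Poly_Mapping"
begin

type_synonym mpoly = "(nat \<Rightarrow>\<^sub>0 nat) \<Rightarrow>\<^sub>0 complex"

definition Var :: "nat \<Rightarrow> mpoly" where
  "Var i = Poly_Mapping.single (Poly_Mapping.single i 1) 1"

definition Const :: "complex \<Rightarrow> mpoly" where
  "Const c = Poly_Mapping.single 0 c"

text \<open>Set of variables occurring in a polynomial; C[x_i : i in S] is {p. vars p \<subseteq> S}.\<close>
definition vars :: "mpoly \<Rightarrow> nat set" where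
  "vars p = (\<Union>m\<in>Poly_Mapping.keys p. Poly_Mapping.keys (m :: nat \<Rightarrow>\<^sub>0 nat))"

definition subst :: "(nat \<Rightarrow> mpoly) \<Rightarrow> mpoly \<Rightarrow> mpoly" where
  "subst s p = (\<Sum>m\<in>Poly_Mapping.keys p. Const (Poly_Mapping.lookup p m) *
     (\<Prod>i\<in>Poly_Mapping.keys (m :: nat \<Rightarrow>\<^sub>0 nat). s i ^ Poly_Mapping.lookup m i))"

text \<open>Endomorphisms of C[x_1,...,x_N] are represented by the images of the variables
  (a function s with s i the image of x_i for i in {1..N}, and s i = x_i otherwise).\<close>
definition compose :: "(nat \<Rightarrow> mpoly) \<Rightarrow> (nat \<Rightarrow> mpoly) \<Rightarrow> (nat \<Rightarrow> mpoly)" where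
  "compose f g = (\<lambda>i. subst f (g i))"

definition elementary :: "nat \<Rightarrow> (nat \<Rightarrow> mpoly) \<Rightarrow> bool" where
  "elementary N f \<longleftrightarrow> (\<exists>i g. i \<in> {1..N} \<and> vars g \<subseteq> {1..N} - {i} \<and>
      f = (\<lambda>j. if j = i then Var i + g else Var j))"

definition linear_aut :: "nat \<Rightarrow> (nat \<Rightarrow> mpoly) \<Rightarrow> bool" where
  "linear_aut N f \<longleftrightarrow> (\<exists>A B :: nat \<Rightarrow> nat \<Rightarrow> complex.
      (\<forall>i\<in>{1..N}. \<forall>l\<in>{1..N}. (\<Sum>j\<in>{1..N}. A i j * B j l) = (if i = l then 1 else 0)) \<and>
      (\<forall>i\<in>{1..N}. \<forall>l\<in>{1..N}. (\<Sum>j\<in>{1..N}. B i j * A j l) = (if i = l then 1 else 0)) \<and>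
      f = (\<lambda>i. if i \<in> {1..N} then (\<Sum>j\<in>{1..N}. Const (A i j) * Var j) else Var i))"

inductive tame :: "nat \<Rightarrow> (nat \<Rightarrow> mpoly) \<Rightarrow> bool" for N where
  elem: "elementary N f \<Longrightarrow> tame N f"
| lin: "linear_aut N f \<Longrightarrow> tame N f"
| comp: "tame N f \<Longrightarrow> tame N g \<Longrightarrow> tame N (compose f g)"

end

theory Submission
  imports Defs "Jordan_Normal_Form.Char_Poly"
begin

(* Tameness is used only through the fact that a tame automorphism phi has a polynomial
   inverse psi. By the chain rule, the Jacobian matrix A of phi at the origin is then invertible,
   so its rows indexed by I are linearly independent, and one can choose a k x n matrix M with
   A_II + A_IJ M invertible. Substituting the linear forms q_j = sum_i M_ji x_i for the x_j
   makes A_II + A_IJ M the Jacobian matrix of phi_q at the origin, so the Jacobian determinant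
   of phi_q is a nonzero polynomial. Finally the Jacobian criterion gives injectivity: if
   phi_q(P) = 0, the chain rule shows that the vector (phi_q(dP/dx_i))_i lies in the kernel of the
   transposed Jacobian matrix, hence vanishes, and induction on the degree yields P = 0. *)

interpretation Const: comm_ring_hom Const
  by unfold_locales (simp_all add: Const_def single_add mult_single)

lemma Const_eq_iff [simp]: "Const a = Const b \<longleftrightarrow> a = b"
  unfolding Const_def by (metis lookup_single_eq)

lemma single_eq_Const_mult: "Poly_Mapping.single m c = Const c * Poly_Mapping.single m 1"
  by (simp add: Const_def mult_single)

lemma poly_mapping_sum_single:
  "(\<Sum>m\<in>Poly_Mapping.keys p. Poly_Mapping.single m (Poly_Mapping.lookup p m)) = p"
  by (rule poly_mapping_eqI) (simp add: lookup_sum lookup_single when_def sum.delta' in_keys_iff)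

lemma Var_power: "Var i ^ e = Poly_Mapping.single (Poly_Mapping.single i e) 1"
  by (induction e) (simp_all add: Var_def mult_single single_add[symmetric] add.commute)

definition subst_monom :: "(nat \<Rightarrow> mpoly) \<Rightarrow> (nat \<Rightarrow>\<^sub>0 nat) \<Rightarrow> mpoly" where
  "subst_monom s m = (\<Prod>i\<in>Poly_Mapping.keys m. s i ^ Poly_Mapping.lookup m i)"

lemma subst_monom_superset:
  "finite K \<Longrightarrow> Poly_Mapping.keys m \<subseteq> K \<Longrightarrow>
    subst_monom s m = (\<Prod>i\<in>K. s i ^ Poly_Mapping.lookup m i)"
  unfolding subst_monom_def by (rule prod.mono_neutral_left) (auto simp: in_keys_iff)

lemma subst_monom_add: "subst_monom s (a + b) = subst_monom s a * subst_monom s b"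
proof -
  let ?K = "Poly_Mapping.keys a \<union> Poly_Mapping.keys b"
  have "subst_monom s (a + b) = (\<Prod>i\<in>?K. s i ^ Poly_Mapping.lookup (a + b) i)"
    by (rule subst_monom_superset) (use keys_add[of a b] in auto)
  also have "\<dots> = (\<Prod>i\<in>?K. s i ^ Poly_Mapping.lookup a i) * (\<Prod>i\<in>?K. s i ^ Poly_Mapping.lookup b i)"
    by (simp add: lookup_add power_add prod.distrib)
  also have "\<dots> = subst_monom s a * subst_monom s b"
    by (simp add: subst_monom_superset[where K = ?K])
  finally show ?thesis .
qed

lemma prod_single_1:
  "(\<Prod>i\<in>A. Poly_Mapping.single (f i) (1 :: 'b :: comm_semiring_1)) = Poly_Mapping.single (sum f A) 1"
  by (induction A rule: infinite_finite_induct) (simp_all add: mult_single)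

lemma subst_monom_Var: "subst_monom Var m = Poly_Mapping.single m 1"
  by (simp add: subst_monom_def Var_power prod_single_1 poly_mapping_sum_single)

lemma subst_eq_sum:
  "subst s p = (\<Sum>m\<in>Poly_Mapping.keys p. Const (Poly_Mapping.lookup p m) * subst_monom s m)"
  by (simp add: subst_def subst_monom_def)

lemma subst_superset:
  "finite K \<Longrightarrow> Poly_Mapping.keys p \<subseteq> K \<Longrightarrow>
    subst s p = (\<Sum>m\<in>K. Const (Poly_Mapping.lookup p m) * subst_monom s m)"
  unfolding subst_eq_sum by (rule sum.mono_neutral_left) (auto simp: in_keys_iff)

lemma subst_single: "subst s (Poly_Mapping.single m c) = Const c * subst_monom s m"
  by (cases "c = 0") (simp_all add: subst_eq_sum)

lemma subst_add: "subst s (p + q) = subst s p + subst s q"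
proof -
  let ?K = "Poly_Mapping.keys p \<union> Poly_Mapping.keys q"
  have "subst s (p + q) = (\<Sum>m\<in>?K. Const (Poly_Mapping.lookup (p + q) m) * subst_monom s m)"
    by (rule subst_superset) (use keys_add[of p q] in auto)
  also have "\<dots> = subst s p + subst s q"
    by (simp add: subst_superset[where K = ?K] lookup_add Const.hom_add distrib_right sum.distrib)
  finally show ?thesis .
qed

interpretation subst: comm_monoid_add_hom "subst s" for s
  by unfold_locales (simp_all add: subst_add subst_eq_sum[of _ 0])

lemma subst_mult: "subst s (p * q) = subst s p * subst s q"
proof -
  let ?c = "\<lambda>a b. Poly_Mapping.lookup p a * Poly_Mapping.lookup q b"
  have "p * q = (\<Sum>a\<in>Poly_Mapping.keys p. \<Sum>b\<in>Poly_Mapping.keys q.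
      Poly_Mapping.single (a + b) (?c a b))"
    by (subst (1 2) poly_mapping_sum_single[symmetric]) (simp add: sum_product mult_single)
  then show ?thesis
    by (simp add: subst.hom_sum subst_single subst_eq_sum[of s p] subst_eq_sum[of s q]
        sum_product Const.hom_mult subst_monom_add mult_ac)
qed

interpretation subst: comm_ring_hom "subst s" for s
  by unfold_locales (simp_all add: subst_mult subst_single[of s 0 1, simplified] subst_monom_def)

lemma subst_Const [simp]: "subst s (Const c) = Const c"
  by (simp add: Const_def subst_single subst_monom_def)

lemma subst_Var [simp]: "subst s (Var i) = s i"
  by (simp add: Var_def subst_single subst_monom_def)

lemma subst_Var_id [simp]: "subst Var p = p"
  by (simp add: subst_eq_sum subst_monom_Var single_eq_Const_mult[symmetric] poly_mapping_sum_single)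

lemma subst_subst_monom: "subst t (subst_monom s m) = subst_monom (\<lambda>i. subst t (s i)) m"
  by (simp add: subst_monom_def subst.hom_prod subst.hom_power)

lemma subst_subst: "subst t (subst s p) = subst (\<lambda>i. subst t (s i)) p"
  by (simp add: subst_eq_sum[of s] subst_eq_sum[of "\<lambda>i. subst t (s i)"] subst.hom_sum
      subst.hom_mult subst_subst_monom)

lemma subst_cong: "(\<And>i. i \<in> vars p \<Longrightarrow> s i = t i) \<Longrightarrow> subst s p = subst t p"
  unfolding subst_def vars_def
  by (intro sum.cong arg_cong2[where f = times] prod.cong) (auto intro: arg_cong2[where f = power])

lemma vars_Const [simp]: "vars (Const c) = {}"
  by (simp add: vars_def Const_def)

lemma vars_Var [simp]: "vars (Var i) = {i}"
  by (simp add: vars_def Var_def)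

lemma vars_1 [simp]: "vars 1 = {}"
  using vars_Const[of 1] by simp

lemma vars_add: "vars (p + q) \<subseteq> vars p \<union> vars q"
  using keys_add[of p q] by (auto simp: vars_def)

lemma vars_diff: "vars (p - q) \<subseteq> vars p \<union> vars q"
  using vars_add[of p "- q"] by (simp add: vars_def)

lemma vars_mult: "vars (p * q) \<subseteq> vars p \<union> vars q"
proof
  fix i assume "i \<in> vars (p * q)"
  then obtain m where m: "m \<in> Poly_Mapping.keys (p * q)" "i \<in> Poly_Mapping.keys m"
    by (auto simp: vars_def)
  then obtain a b where "a \<in> Poly_Mapping.keys p" "b \<in> Poly_Mapping.keys q" "m = a + b"
    using keys_mult[of p q] by blast
  with m keys_add[of a b] show "i \<in> vars p \<union> vars q"
    by (auto simp: vars_def)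
qed

lemma vars_sum: "vars (sum f A) \<subseteq> (\<Union>x\<in>A. vars (f x))"
proof (induction A rule: infinite_finite_induct)
  case (insert x F)
  then show ?case using vars_add[of "f x" "sum f F"] by auto
qed (simp_all add: vars_def)

lemma vars_prod: "vars (prod f A) \<subseteq> (\<Union>x\<in>A. vars (f x))"
proof (induction A rule: infinite_finite_induct)
  case (insert x F)
  then show ?case using vars_mult[of "f x" "prod f F"] by auto
qed simp_all

lemma vars_power: "vars (p ^ n) \<subseteq> vars p"
  using vars_prod[of "\<lambda>_. p" "{..<n}"] by (auto split: if_splits)

lemma vars_linear_form: "vars (\<Sum>i\<in>A. Const (c i) * Var i) \<subseteq> A"
  using vars_sum[of "\<lambda>i. Const (c i) * Var i" A] vars_mult[of "Const _" "Var _"] by fastforce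

lemma vars_subst: "vars (subst s p) \<subseteq> (\<Union>i\<in>vars p. vars (s i))"
proof -
  have monom: "vars (subst_monom s m) \<subseteq> (\<Union>i\<in>Poly_Mapping.keys m. vars (s i))" for m
  proof -
    have "vars (subst_monom s m) \<subseteq> (\<Union>i\<in>Poly_Mapping.keys m. vars (s i ^ Poly_Mapping.lookup m i))"
      unfolding subst_monom_def by (rule vars_prod)
    also have "\<dots> \<subseteq> (\<Union>i\<in>Poly_Mapping.keys m. vars (s i))"
      using vars_power by (intro UN_mono) auto
    finally show ?thesis .
  qed
  have "vars (subst s p) \<subseteq>
      (\<Union>m\<in>Poly_Mapping.keys p. vars (Const (Poly_Mapping.lookup p m) * subst_monom s m))"
    unfolding subst_eq_sum by (rule vars_sum)
  also have "\<dots> \<subseteq> (\<Union>m\<in>Poly_Mapping.keys p. vars (subst_monom s m))"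
    using vars_mult[of "Const _"] by (intro UN_mono) auto
  also have "\<dots> \<subseteq> (\<Union>m\<in>Poly_Mapping.keys p. \<Union>i\<in>Poly_Mapping.keys m. vars (s i))"
    using monom by (intro UN_mono) auto
  also have "\<dots> = (\<Union>i\<in>vars p. vars (s i))"
    by (auto simp: vars_def[of p])
  finally show ?thesis .
qed

definition const_coeff :: "mpoly \<Rightarrow> complex" where
  "const_coeff p = Poly_Mapping.lookup p 0"

lemma const_coeff_Const [simp]: "const_coeff (Const c) = c"
  by (simp add: const_coeff_def Const_def)

lemma const_coeff_Var [simp]: "const_coeff (Var i) = 0"
proof -
  have "Poly_Mapping.single i 1 \<noteq> (0 :: nat \<Rightarrow>\<^sub>0 nat)"
    by (metis lookup_single_eq lookup_zero one_neq_zero)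
  then show ?thesis
    by (simp add: const_coeff_def Var_def lookup_single)
qed

lemma subst_zero_eq_Const: "subst (\<lambda>_. 0) p = Const (const_coeff p)"
proof -
  have monom: "subst_monom (\<lambda>_. 0) m = (if m = 0 then 1 else 0)" for m
  proof (cases "m = 0")
    case False
    then obtain i where "i \<in> Poly_Mapping.keys m"
      by (metis keys_eq_empty ex_in_conv)
    then show ?thesis
      by (auto simp: subst_monom_def in_keys_iff intro!: prod_zero)
  qed (simp add: subst_monom_def)
  then show ?thesis
    by (simp add: subst_eq_sum monom const_coeff_def if_distrib sum.delta' in_keys_iff cong: if_cong)
qed

interpretation const_coeff: comm_ring_hom const_coeff
proof unfold_locales
  fix p q
  show "const_coeff (p * q) = const_coeff p * const_coeff q"
    using subst.hom_mult[of "\<lambda>_. 0" p q] by (simp add: subst_zero_eq_Const flip: Const.hom_mult)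
qed (simp_all add: const_coeff_def lookup_add)

lemma const_coeff_subst:
  assumes "\<And>v. const_coeff (s v) = 0"
  shows "const_coeff (subst s p) = const_coeff p"
proof -
  have "Const (const_coeff (subst s p)) = subst (\<lambda>_. 0) (subst s p)"
    by (simp add: subst_zero_eq_Const)
  also have "\<dots> = Const (const_coeff p)"
    by (simp only: subst_subst) (simp add: subst_zero_eq_Const assms)
  finally show ?thesis
    by (simp only: Const_eq_iff)
qed

section \<open>Partial derivatives and the chain rule\<close>

lemma mpoly_induct [consumes 1, case_names Const Var add mult]:
  assumes "vars p \<subseteq> V"
    and Const: "\<And>c. P (Const c)"
    and Var: "\<And>i. i \<in> V \<Longrightarrow> P (Var i)"
    and add: "\<And>p q. P p \<Longrightarrow> P q \<Longrightarrow> P (p + q)"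
    and mult: "\<And>p q. P p \<Longrightarrow> P q \<Longrightarrow> P (p * q)"
  shows "P p"
proof -
  have sum: "P (sum f A)" if "\<And>x. x \<in> A \<Longrightarrow> P (f x)" for f :: "'a \<Rightarrow> mpoly" and A
    using that by (induction A rule: infinite_finite_induct) (auto intro: add Const[of 0, simplified])
  have prod: "P (prod f A)" if "\<And>x. x \<in> A \<Longrightarrow> P (f x)" for f :: "'a \<Rightarrow> mpoly" and A
    using that by (induction A rule: infinite_finite_induct) (auto intro: mult Const[of 1, simplified])
  have "P (subst Var p)"
    unfolding subst_eq_sum subst_monom_def
  proof (intro sum mult[OF Const] prod)
    fix m i assume "m \<in> Poly_Mapping.keys p" "i \<in> Poly_Mapping.keys m"
    then have "i \<in> V"
      using assms(1) by (auto simp: vars_def)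
    then show "P (Var i ^ Poly_Mapping.lookup m i)"
      using prod[of "{..<Poly_Mapping.lookup m i}" "\<lambda>_. Var i"] Var by simp
  qed
  then show ?thesis
    by simp
qed

definition partial_deriv :: "nat \<Rightarrow> mpoly \<Rightarrow> mpoly" where
  "partial_deriv l p = (\<Sum>m\<in>Poly_Mapping.keys p. Poly_Mapping.single (m - Poly_Mapping.single l 1)
      (of_nat (Poly_Mapping.lookup m l) * Poly_Mapping.lookup p m))"

lemma partial_deriv_superset:
  "finite K \<Longrightarrow> Poly_Mapping.keys p \<subseteq> K \<Longrightarrow>
    partial_deriv l p = (\<Sum>m\<in>K. Poly_Mapping.single (m - Poly_Mapping.single l 1)
      (of_nat (Poly_Mapping.lookup m l) * Poly_Mapping.lookup p m))"
  unfolding partial_deriv_def by (rule sum.mono_neutral_left) (auto simp: in_keys_iff)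

lemma partial_deriv_add: "partial_deriv l (p + q) = partial_deriv l p + partial_deriv l q"
proof -
  let ?K = "Poly_Mapping.keys p \<union> Poly_Mapping.keys q"
  have "partial_deriv l (p + q) = (\<Sum>m\<in>?K. Poly_Mapping.single (m - Poly_Mapping.single l 1)
      (of_nat (Poly_Mapping.lookup m l) * Poly_Mapping.lookup (p + q) m))"
    by (rule partial_deriv_superset) (use keys_add[of p q] in auto)
  also have "\<dots> = partial_deriv l p + partial_deriv l q"
    by (simp add: partial_deriv_superset[where K = ?K] lookup_add distrib_left single_add sum.distrib)
  finally show ?thesis .
qed

interpretation partial_deriv: ab_group_add_hom "partial_deriv l" for l
  by unfold_locales (simp_all add: partial_deriv_add partial_deriv_def[of _ 0])

lemma partial_deriv_single:
  "partial_deriv l (Poly_Mapping.single m c) =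
    Poly_Mapping.single (m - Poly_Mapping.single l 1) (of_nat (Poly_Mapping.lookup m l) * c)"
  by (cases "c = 0") (simp_all add: partial_deriv_def)

lemma single_diff_add:
  "Poly_Mapping.single (a - Poly_Mapping.single l 1 + b) (of_nat (Poly_Mapping.lookup a l) * c) =
    Poly_Mapping.single (a + b - Poly_Mapping.single l 1)
      (of_nat (Poly_Mapping.lookup a l) * (c :: complex))"
proof (cases "Poly_Mapping.lookup a l = 0")
  case False
  then have "a - Poly_Mapping.single l 1 + b = a + b - Poly_Mapping.single l 1"
    by (intro poly_mapping_eqI) (auto simp: lookup_add minus_poly_mapping.rep_eq lookup_single when_def)
  then show ?thesis
    by simp
qed simp

lemma partial_deriv_mult_single:
  "partial_deriv l (Poly_Mapping.single a c * Poly_Mapping.single b d) =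
    partial_deriv l (Poly_Mapping.single a c) * Poly_Mapping.single b d +
    Poly_Mapping.single a c * partial_deriv l (Poly_Mapping.single b d)"
  using single_diff_add[of a l b "c * d"] single_diff_add[of b l a "c * d"]
  by (simp add: mult_single partial_deriv_single lookup_add single_add[symmetric] algebra_simps)

lemma partial_deriv_mult: "partial_deriv l (p * q) = partial_deriv l p * q + p * partial_deriv l q"
proof -
  let ?s = "\<lambda>p m. Poly_Mapping.single m (Poly_Mapping.lookup p m)"
  have "partial_deriv l ((\<Sum>a\<in>Poly_Mapping.keys p. ?s p a) * (\<Sum>b\<in>Poly_Mapping.keys q. ?s q b)) =
      partial_deriv l (\<Sum>a\<in>Poly_Mapping.keys p. ?s p a) * (\<Sum>b\<in>Poly_Mapping.keys q. ?s q b) +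
      (\<Sum>a\<in>Poly_Mapping.keys p. ?s p a) * partial_deriv l (\<Sum>b\<in>Poly_Mapping.keys q. ?s q b)"
    by (simp add: sum_product partial_deriv.hom_sum partial_deriv_mult_single sum.distrib)
  then show ?thesis
    by (simp only: poly_mapping_sum_single)
qed

lemma partial_deriv_Const [simp]: "partial_deriv l (Const c) = 0"
  by (simp add: Const_def partial_deriv_single)

lemma partial_deriv_Var: "partial_deriv l (Var i) = (if i = l then 1 else 0)"
  by (simp add: Var_def partial_deriv_single lookup_single)

lemma lookup_partial_deriv:
  "Poly_Mapping.lookup (partial_deriv l p) m =
    of_nat (Suc (Poly_Mapping.lookup m l)) * Poly_Mapping.lookup p (m + Poly_Mapping.single l 1)"
proof -
  let ?e = "Poly_Mapping.single l (1 :: nat)"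
  have "(of_nat (Poly_Mapping.lookup a l) * Poly_Mapping.lookup p a when a - ?e = m) =
      (of_nat (Suc (Poly_Mapping.lookup m l)) * Poly_Mapping.lookup p a when a = m + ?e)" for a
  proof (cases "Poly_Mapping.lookup a l = 0")
    case True
    then have "a \<noteq> m + ?e"
      by (auto simp: lookup_add)
    with True show ?thesis
      by simp
  next
    case False
    then have "a - ?e = m \<longleftrightarrow> a = m + ?e"
      by (auto simp: poly_mapping_eq_iff fun_eq_iff lookup_add minus_poly_mapping.rep_eq
          lookup_single when_def)
    then show ?thesis
      by (cases "a = m + ?e") (simp_all add: lookup_add)
  qed
  then show ?thesis
    by (simp add: partial_deriv_def lookup_sum lookup_single when_def sum.delta' in_keys_iff cong: if_cong)
qed

lemma keys_partial_deriv:
  "m \<in> Poly_Mapping.keys (partial_deriv l p) \<Longrightarrow> m + Poly_Mapping.single l 1 \<in> Poly_Mapping.keys p"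
  by (simp add: in_keys_iff lookup_partial_deriv)

lemma vars_partial_deriv: "vars (partial_deriv l p) \<subseteq> vars p"
proof
  fix i assume "i \<in> vars (partial_deriv l p)"
  then obtain m where m: "m \<in> Poly_Mapping.keys (partial_deriv l p)" "i \<in> Poly_Mapping.keys m"
    by (auto simp: vars_def)
  then have "i \<in> Poly_Mapping.keys (m + Poly_Mapping.single l 1)"
    by (simp add: in_keys_iff lookup_add)
  with keys_partial_deriv[OF m(1)] show "i \<in> vars p"
    by (auto simp: vars_def)
qed

lemma partial_deriv_eq_0_if_notin_vars:
  assumes "l \<notin> vars p"
  shows "partial_deriv l p = 0"
proof (rule ccontr)
  assume "partial_deriv l p \<noteq> 0"
  then obtain m where "m \<in> Poly_Mapping.keys (partial_deriv l p)"
    by (metis keys_eq_empty ex_in_conv)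
  then have "m + Poly_Mapping.single l 1 \<in> Poly_Mapping.keys p"
    by (rule keys_partial_deriv)
  moreover have "l \<in> Poly_Mapping.keys (m + Poly_Mapping.single l 1)"
    by (simp add: in_keys_iff lookup_add)
  ultimately show False
    using assms by (auto simp: vars_def)
qed

lemma eq_Const_if_partial_derivs_eq_0:
  assumes "vars p \<subseteq> V" and "\<And>l. l \<in> V \<Longrightarrow> partial_deriv l p = 0"
  shows "p = Const (const_coeff p)"
proof (rule poly_mapping_eqI)
  have partial_derivs: "partial_deriv l p = 0" for l
    using assms partial_deriv_eq_0_if_notin_vars[of l p] by (cases "l \<in> V") auto
  fix m
  show "Poly_Mapping.lookup p m = Poly_Mapping.lookup (Const (const_coeff p)) m"
  proof (cases "m = 0")
    case False
    then obtain l where "l \<in> Poly_Mapping.keys m"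
      by (metis keys_eq_empty ex_in_conv)
    then have "m = (m - Poly_Mapping.single l 1) + Poly_Mapping.single l 1"
      by (intro poly_mapping_eqI)
        (auto simp: lookup_add minus_poly_mapping.rep_eq lookup_single when_def in_keys_iff)
    then have "Poly_Mapping.lookup p m = 0"
      using lookup_partial_deriv[of l p "m - Poly_Mapping.single l 1"] partial_derivs[of l]
      by (simp del: of_nat_Suc)
    with False show ?thesis
      by (simp add: Const_def lookup_single)
  qed (simp add: Const_def const_coeff_def)
qed

theorem partial_deriv_subst:
  assumes "finite V" and "vars p \<subseteq> V"
  shows "partial_deriv l (subst s p) = (\<Sum>v\<in>V. subst s (partial_deriv v p) * partial_deriv l (s v))"
  using assms(2)
proof (induction rule: mpoly_induct)
  case (Var i)
  have "(\<Sum>v\<in>V. subst s (partial_deriv v (Var i)) * partial_deriv l (s v)) =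
      (\<Sum>v\<in>V. if v = i then partial_deriv l (s v) else 0)"
    by (intro sum.cong) (auto simp: partial_deriv_Var)
  with assms(1) Var show ?case
    by simp
next
  case (add p q)
  then show ?case
    by (simp add: partial_deriv.hom_add subst.hom_add distrib_right sum.distrib)
next
  case (mult p q)
  then show ?case
    by (simp add: partial_deriv_mult subst.hom_add subst.hom_mult sum_distrib_left sum_distrib_right
        distrib_left distrib_right sum.distrib mult_ac)
qed simp

section \<open>The Jacobian criterion\<close>

definition jacobian :: "(nat \<Rightarrow> nat) \<Rightarrow> nat \<Rightarrow> (nat \<Rightarrow> mpoly) \<Rightarrow> mpoly mat" where
  "jacobian e n \<psi> = mat n n (\<lambda>(a, b). partial_deriv (e b) (\<psi> (e a)))"

lemma jacobian_carrier [simp]: "jacobian e n \<psi> \<in> carrier_mat n n"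
  by (simp add: jacobian_def)

lemma subst_partial_deriv_eq_0:
  assumes e: "bij_betw e {0..<n} I" and det: "det (jacobian e n \<psi>) \<noteq> 0"
    and P: "vars P \<subseteq> I" "subst \<psi> P = 0" and "i \<in> I"
  shows "subst \<psi> (partial_deriv i P) = 0"
proof -
  define w where "w = vec n (\<lambda>b. subst \<psi> (partial_deriv (e b) P))"
  have "transpose_mat (jacobian e n \<psi>) *\<^sub>v w = 0\<^sub>v n"
  proof (rule eq_vecI)
    fix a assume "a < dim_vec (0\<^sub>v n :: mpoly vec)"
    then have "a < n"
      by simp
    have "(transpose_mat (jacobian e n \<psi>) *\<^sub>v w) $ a =
        (\<Sum>b<n. partial_deriv (e a) (\<psi> (e b)) * subst \<psi> (partial_deriv (e b) P))"
      using \<open>a < n\<close> by (simp add: jacobian_def w_def scalar_prod_def atLeast0LessThan)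
    also have "\<dots> = (\<Sum>v\<in>I. subst \<psi> (partial_deriv v P) * partial_deriv (e a) (\<psi> v))"
      using sum.reindex_bij_betw[OF e] by (simp add: atLeast0LessThan mult.commute)
    also have "\<dots> = 0"
      using partial_deriv_subst[OF _ P(1), of "e a" \<psi>] bij_betw_finite[OF e] P(2) by simp
    finally show "(transpose_mat (jacobian e n \<psi>) *\<^sub>v w) $ a = 0\<^sub>v n $ a"
      using \<open>a < n\<close> by simp
  qed (simp add: w_def jacobian_def)
  moreover have "det (transpose_mat (jacobian e n \<psi>)) \<noteq> 0"
    using det by (simp add: det_transpose[of _ n])
  ultimately have "w = 0\<^sub>v n"
    using det_0_iff_vec_prod_zero[of "transpose_mat (jacobian e n \<psi>)" n] carrier_vecI[of w n]
    by (fastforce simp: w_def)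
  moreover obtain a where "a < n" "e a = i"
    using e \<open>i \<in> I\<close> by (auto simp: bij_betw_def)
  ultimately show ?thesis
    by (metis index_vec index_zero_vec(1) w_def)
qed

definition monom_degree :: "(nat \<Rightarrow>\<^sub>0 nat) \<Rightarrow> nat" where
  "monom_degree m = (\<Sum>i\<in>Poly_Mapping.keys m. Poly_Mapping.lookup m i)"

lemma monom_degree_add_single: "monom_degree (m + Poly_Mapping.single l 1) = Suc (monom_degree m)"
proof -
  let ?K = "insert l (Poly_Mapping.keys m)"
  have degree: "monom_degree m' = (\<Sum>i\<in>?K. Poly_Mapping.lookup m' i)"
    if "Poly_Mapping.keys m' \<subseteq> ?K" for m'
    unfolding monom_degree_def using that by (intro sum.mono_neutral_left) (auto simp: in_keys_iff)
  have "monom_degree (m + Poly_Mapping.single l 1) =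
      (\<Sum>i\<in>?K. Poly_Mapping.lookup (m + Poly_Mapping.single l 1) i)"
    using keys_add[of m "Poly_Mapping.single l 1"] by (intro degree) auto
  also have "\<dots> = Suc (\<Sum>i\<in>?K. Poly_Mapping.lookup m i)"
    by (simp add: lookup_add lookup_single when_def sum.distrib)
  also have "(\<Sum>i\<in>?K. Poly_Mapping.lookup m i) = monom_degree m"
    by (rule degree[symmetric]) auto
  finally show ?thesis .
qed

lemma subst_eq_0_imp_eq_0:
  assumes e: "bij_betw e {0..<n} I" and det: "det (jacobian e n \<psi>) \<noteq> 0"
    and "vars P \<subseteq> I" and "subst \<psi> P = 0"
  shows "P = 0"
proof -
  have "P = 0"
    if "vars P \<subseteq> I" "subst \<psi> P = 0" "\<forall>m\<in>Poly_Mapping.keys P. monom_degree m < d" for d P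
    using that
  proof (induction d arbitrary: P)
    case (0 P)
    then have "Poly_Mapping.keys P = {}"
      by auto
    then show ?case
      by simp
  next
    case (Suc d P)
    have "partial_deriv l P = 0" if "l \<in> I" for l
    proof (rule Suc.IH)
      show "vars (partial_deriv l P) \<subseteq> I"
        using vars_partial_deriv Suc.prems(1) by blast
      show "subst \<psi> (partial_deriv l P) = 0"
        using subst_partial_deriv_eq_0[OF e det Suc.prems(1,2) that] .
      show "\<forall>m\<in>Poly_Mapping.keys (partial_deriv l P). monom_degree m < d"
      proof
        fix m assume "m \<in> Poly_Mapping.keys (partial_deriv l P)"
        then have "monom_degree (m + Poly_Mapping.single l 1) < Suc d"
          using keys_partial_deriv Suc.prems(3) by blast
        then show "monom_degree m < d"
          by (simp only: monom_degree_add_single)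
      qed
    qed
    with Suc.prems(1) have "P = Const (const_coeff P)"
      by (rule eq_Const_if_partial_derivs_eq_0)
    with Suc.prems(2) show ?case
      by (metis subst_Const)
  qed
  moreover have
    "\<forall>m\<in>Poly_Mapping.keys P. monom_degree m < Suc (Max (monom_degree ` Poly_Mapping.keys P))"
    by (simp add: le_imp_less_Suc)
  ultimately show ?thesis
    using assms(3,4) by metis
qed

theorem jacobian_criterion:
  assumes e: "bij_betw e {0..<n} I" and det: "det (jacobian e n \<psi>) \<noteq> 0"
  shows "inj_on (subst \<psi>) {p. vars p \<subseteq> I}"
proof (rule inj_onI)
  fix p q assume "p \<in> {p. vars p \<subseteq> I}" "q \<in> {p. vars p \<subseteq> I}" "subst \<psi> p = subst \<psi> q"
  then have "vars (p - q) \<subseteq> I" "subst \<psi> (p - q) = 0"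
    using vars_diff[of p q] by (auto simp: subst.hom_minus)
  then have "p - q = 0"
    by (rule subst_eq_0_imp_eq_0[OF e det])
  then show "p = q"
    by simp
qed

section \<open>Tame automorphisms have polynomial inverses\<close>

definition endo_on :: "nat set \<Rightarrow> (nat \<Rightarrow> mpoly) \<Rightarrow> bool" where
  "endo_on V f \<longleftrightarrow> (\<forall>i\<in>V. vars (f i) \<subseteq> V)"

lemma endo_on_compose: "endo_on V f \<Longrightarrow> endo_on V g \<Longrightarrow> endo_on V (Defs.compose f g)"
  unfolding endo_on_def Defs.compose_def using vars_subst by blast

lemma compose_assoc: "Defs.compose f (Defs.compose g h) = Defs.compose (Defs.compose f g) h"
  by (simp add: Defs.compose_def subst_subst)

lemma compose_Var_left [simp]: "Defs.compose Var f = f"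
  by (simp add: Defs.compose_def)

lemma compose_right_inverse:
  "Defs.compose f f' = Var \<Longrightarrow> Defs.compose g g' = Var \<Longrightarrow>
    Defs.compose (Defs.compose f g) (Defs.compose g' f') = Var"
  by (metis compose_assoc compose_Var_left)

lemma elementary_right_invertible:
  assumes "elementary N f"
  shows "endo_on {1..N} f \<and> (\<exists>g. endo_on {1..N} g \<and> Defs.compose f g = Var)"
proof -
  from assms obtain i h where i: "i \<in> {1..N}" and h: "vars h \<subseteq> {1..N} - {i}"
    and f: "f = (\<lambda>j. if j = i then Var i + h else Var j)"
    by (auto simp: elementary_def)
  define g where "g = (\<lambda>j. if j = i then Var i - h else Var j)"
  have "subst f h = subst Var h"
    by (rule subst_cong) (use h in \<open>auto simp: f\<close>)
  then have "Defs.compose f g = Var"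
    by (auto simp: Defs.compose_def g_def f subst.hom_minus)
  moreover have "endo_on {1..N} f" "endo_on {1..N} g"
    using i h vars_add[of "Var i" h] vars_diff[of "Var i" h] by (auto simp: endo_on_def f g_def)
  ultimately show ?thesis
    by blast
qed

lemma linear_aut_right_invertible:
  assumes "linear_aut N f"
  shows "endo_on {1..N} f \<and> (\<exists>g. endo_on {1..N} g \<and> Defs.compose f g = Var)"
proof -
  from assms obtain A B :: "nat \<Rightarrow> nat \<Rightarrow> complex" where
    BA: "\<forall>i\<in>{1..N}. \<forall>l\<in>{1..N}. (\<Sum>j\<in>{1..N}. B i j * A j l) = (if i = l then 1 else 0)" and
    f: "f = (\<lambda>i. if i \<in> {1..N} then (\<Sum>j\<in>{1..N}. Const (A i j) * Var j) else Var i)"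
    unfolding linear_aut_def by blast
  define g where "g = (\<lambda>i. if i \<in> {1..N} then (\<Sum>j\<in>{1..N}. Const (B i j) * Var j) else Var i)"
  have "Defs.compose f g i = Var i" if "i \<in> {1..N}" for i
  proof -
    have "Defs.compose f g i = (\<Sum>j\<in>{1..N}. \<Sum>l\<in>{1..N}. Const (B i j) * (Const (A j l) * Var l))"
      using that by (simp add: Defs.compose_def g_def f subst.hom_sum subst.hom_mult sum_distrib_left)
    also have "\<dots> = (\<Sum>l\<in>{1..N}. Const (\<Sum>j\<in>{1..N}. B i j * A j l) * Var l)"
      by (subst sum.swap) (simp add: Const.hom_sum Const.hom_mult sum_distrib_right mult.assoc)
    also have "\<dots> = (\<Sum>l\<in>{1..N}. if l = i then Var l else 0)"
      using BA that by (intro sum.cong) auto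
    also have "\<dots> = Var i"
      using that by simp
    finally show ?thesis .
  qed
  then have "Defs.compose f g = Var"
    by (auto simp: Defs.compose_def g_def f)
  moreover have "endo_on {1..N} f" "endo_on {1..N} g"
    using vars_linear_form by (auto simp: endo_on_def f g_def)
  ultimately show ?thesis
    by blast
qed

lemma tame_right_invertible:
  "tame N f \<Longrightarrow> endo_on {1..N} f \<and> (\<exists>g. endo_on {1..N} g \<and> Defs.compose f g = Var)"
proof (induction rule: tame.induct)
  case (elem f)
  then show ?case
    by (rule elementary_right_invertible)
next
  case (lin f)
  then show ?case
    by (rule linear_aut_right_invertible)
next
  case (comp f g)
  then show ?case
    using endo_on_compose compose_right_inverse by metis
qed

lemma right_inverse_if_left_inverse_on:
  fixes A X :: "'i \<Rightarrow> 'i \<Rightarrow> 'a :: field"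
  assumes "finite V"
    and XA: "\<forall>i\<in>V. \<forall>l\<in>V. (\<Sum>j\<in>V. X i j * A j l) = (if i = l then 1 else 0)"
  shows "\<forall>i\<in>V. \<forall>l\<in>V. (\<Sum>j\<in>V. A i j * X j l) = (if i = l then 1 else 0)"
proof -
  obtain g where g: "bij_betw g {0..<card V} V"
    using ex_bij_betw_nat_finite[OF assms(1)] by blast
  let ?m = "card V"
  define mat_of where "mat_of C = mat ?m ?m (\<lambda>(a, b). C (g a) (g b))" for C :: "'i \<Rightarrow> 'i \<Rightarrow> 'a"
  have carrier: "mat_of C \<in> carrier_mat ?m ?m" for C
    by (simp add: mat_of_def)
  have product: "(mat_of C * mat_of D) $$ (a, b) = (\<Sum>j\<in>V. C (g a) j * D j (g b))"
    if "a < ?m" "b < ?m" for C D a b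
    using that sum.reindex_bij_betw[OF g, of "\<lambda>j. C (g a) j * D j (g b)"]
    by (simp add: mat_of_def scalar_prod_def atLeast0LessThan)
  have g_surj: "\<exists>a<?m. g a = i" if "i \<in> V" for i
    using that bij_betw_imp_surj_on[OF g] by (metis atLeast0LessThan imageE lessThan_iff)
  have g_inj: "g a = g b \<longleftrightarrow> a = b" if "a < ?m" "b < ?m" for a b
    using g that by (auto simp: bij_betw_def inj_on_def)
  have "mat_of X * mat_of A = 1\<^sub>m ?m"
  proof (rule eq_matI)
    fix a b assume "a < dim_row (1\<^sub>m ?m :: 'a mat)" "b < dim_col (1\<^sub>m ?m :: 'a mat)"
    then show "(mat_of X * mat_of A) $$ (a, b) = 1\<^sub>m ?m $$ (a, b)"
      using XA bij_betwE[OF g] by (simp add: product g_inj)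
  qed (use carrier in auto)
  then have inverse: "mat_of A * mat_of X = 1\<^sub>m ?m"
    by (rule mat_mult_left_right_inverse[OF carrier carrier])
  show ?thesis
  proof (intro ballI)
    fix i l assume "i \<in> V" "l \<in> V"
    then obtain a b where "a < ?m" "g a = i" "b < ?m" "g b = l"
      using g_surj by blast
    then show "(\<Sum>j\<in>V. A i j * X j l) = (if i = l then 1 else 0)"
      using inverse product[of a b A X] g_inj[of a b] by simp
  qed
qed

lemma finite_det_add_smult_one_eq_0:
  fixes A :: "'a :: field mat"
  assumes A: "A \<in> carrier_mat n n"
  shows "finite {t. det (A + t \<cdot>\<^sub>m 1\<^sub>m n) = 0}"
proof -
  have "char_poly A \<noteq> 0"
    using degree_monic_char_poly[OF A] by (metis coeff_0 zero_neq_one)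
  moreover have det_iff: "det (A + t \<cdot>\<^sub>m 1\<^sub>m n) = 0 \<longleftrightarrow> poly (char_poly A) (- t) = 0" for t
    using A eigenvalue_det[OF A, of "- t"] eigenvalue_root_char_poly[OF A, of "- t"]
    by (simp add: char_matrix_def)
  ultimately have "finite (uminus -` {e. poly (char_poly A) e = 0})"
    by (intro finite_vimageI) (simp_all add: poly_roots_finite)
  then show ?thesis
    by (simp add: vimage_def det_iff)
qed

lemma ex_inverse_if_det_ne_0:
  fixes A :: "'a :: field mat"
  assumes "A \<in> carrier_mat n n" and "det A \<noteq> 0"
  obtains B where "B \<in> carrier_mat n n" "A * B = 1\<^sub>m n" "B * A = 1\<^sub>m n"
  using det_non_zero_imp_unit[OF assms, of undefined] by (auto simp: Units_def ring_mat_simps)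

lemma ex_shift_det_ne_0:
  fixes A P :: "'a :: field_char_0 mat"
  assumes A: "A \<in> carrier_mat n n" and P: "P \<in> carrier_mat n n"
  obtains t where "t \<noteq> 0" "det (P + t \<cdot>\<^sub>m 1\<^sub>m n) \<noteq> 0" "det (A + inverse t \<cdot>\<^sub>m 1\<^sub>m n) \<noteq> 0"
proof -
  let ?bad = "{0} \<union> {t. det (P + t \<cdot>\<^sub>m 1\<^sub>m n) = 0} \<union> inverse ` {s. det (A + s \<cdot>\<^sub>m 1\<^sub>m n) = 0}"
  have "finite ?bad"
    using finite_det_add_smult_one_eq_0[OF A] finite_det_add_smult_one_eq_0[OF P] by simp
  then have "\<exists>t. t \<notin> ?bad"
    by (rule ex_new_if_finite[OF infinite_UNIV_char_0])
  then obtain t where "t \<notin> ?bad" ..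
  then show ?thesis
    by (intro that[of t]) (auto simp: image_iff)
qed

lemma ex_det_add_mult_ne_0:
  fixes A P B U :: "'a :: field_char_0 mat"
  assumes A: "A \<in> carrier_mat n n" and P: "P \<in> carrier_mat n n"
    and B: "B \<in> carrier_mat n k" and U: "U \<in> carrier_mat k n"
    and sum_eq_1: "A * P + B * U = 1\<^sub>m n"
  shows "\<exists>L\<in>carrier_mat k n. det (A + B * L) \<noteq> 0"
proof -
  obtain t where t: "t \<noteq> 0" "det (P + t \<cdot>\<^sub>m 1\<^sub>m n) \<noteq> 0" "det (A + inverse t \<cdot>\<^sub>m 1\<^sub>m n) \<noteq> 0"
    using ex_shift_det_ne_0[OF A P] .
  (* For L = U Q^-1 with Q = P + t: (A + B L) Q = A P + B U + t A = t (A + 1/t). *)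
  define Q where "Q = P + t \<cdot>\<^sub>m 1\<^sub>m n"
  have Q: "Q \<in> carrier_mat n n"
    using P by (simp add: Q_def)
  obtain Q' where Q': "Q' \<in> carrier_mat n n" "Q' * Q = 1\<^sub>m n"
    using ex_inverse_if_det_ne_0[OF Q t(2)[folded Q_def]] by blast
  define L where "L = U * Q'"
  have L: "L \<in> carrier_mat k n"
    using U Q' by (simp add: L_def)
  have "B * L * Q = B * ((U * Q') * Q)"
    unfolding L_def by (rule assoc_mult_mat[OF B _ Q]) (use U Q'(1) in simp)
  also have "(U * Q') * Q = U"
    using assoc_mult_mat[OF U Q'(1) Q] Q'(2) U by simp
  finally have BLQ: "B * L * Q = B * U" .
  have "(A + B * L) * Q = A * Q + B * U"
    using add_mult_distrib_mat[OF A _ Q, of "B * L"] B L BLQ by simp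
  also have "A * Q = A * P + t \<cdot>\<^sub>m A"
    using mult_add_distrib_mat[OF A P, of "t \<cdot>\<^sub>m 1\<^sub>m n"]
      mult_smult_distrib[OF A one_carrier_mat, of t] A
    by (simp add: Q_def)
  also have "A * P + t \<cdot>\<^sub>m A + B * U = (A * P + B * U) + t \<cdot>\<^sub>m A"
    using A P B U by (intro eq_matI) (auto simp: ac_simps)
  also have "\<dots> = t \<cdot>\<^sub>m (A + inverse t \<cdot>\<^sub>m 1\<^sub>m n)"
    unfolding sum_eq_1 using A t(1) by (intro eq_matI) (auto simp: field_simps)
  finally have "det (A + B * L) * det Q = t ^ n * det (A + inverse t \<cdot>\<^sub>m 1\<^sub>m n)"
    using det_mult[OF _ Q, of "A + B * L"] A B L by simp
  with t(1,3) have "det (A + B * L) \<noteq> 0"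
    by auto
  with L show ?thesis
    by blast
qed

lemma ex_det_block_add_mult_ne_0:
  fixes A X :: "'i \<Rightarrow> 'i \<Rightarrow> 'a :: field_char_0"
  assumes J: "finite J" and disjoint: "I \<inter> J = {}"
    and e: "bij_betw e {0..<n} I" and f: "bij_betw f {0..<k} J"
    and AX: "\<forall>i\<in>I \<union> J. \<forall>l\<in>I \<union> J. (\<Sum>j\<in>I \<union> J. A i j * X j l) = (if i = l then 1 else 0)"
  shows "\<exists>L\<in>carrier_mat k n.
    det (mat n n (\<lambda>(a, b). A (e a) (e b)) + mat n k (\<lambda>(a, c). A (e a) (f c)) * L) \<noteq> 0"
proof -
  have I: "finite I"
    using bij_betw_finite[OF e] by simp
  have e_inj: "e a = e b \<longleftrightarrow> a = b" if "a < n" "b < n" for a b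
    using e that by (auto simp: bij_betw_def inj_on_def)
  define Pm where "Pm = mat n n (\<lambda>(a, b). X (e a) (e b))"
  define Um where "Um = mat k n (\<lambda>(c, b). X (f c) (e b))"
  have "mat n n (\<lambda>(a, b). A (e a) (e b)) * Pm + mat n k (\<lambda>(a, c). A (e a) (f c)) * Um = 1\<^sub>m n"
    (is "?Am * _ + ?Bm * _ = _")
  proof (rule eq_matI)
    fix a b assume "a < dim_row (1\<^sub>m n :: 'a mat)" "b < dim_col (1\<^sub>m n :: 'a mat)"
    then have ab: "a < n" "b < n" "e a \<in> I \<union> J" "e b \<in> I \<union> J"
      using bij_betwE[OF e] by auto
    have "(?Am * Pm + ?Bm * Um) $$ (a, b) =
        (\<Sum>j\<in>I. A (e a) j * X j (e b)) + (\<Sum>j\<in>J. A (e a) j * X j (e b))"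
      using ab sum.reindex_bij_betw[OF e, of "\<lambda>j. A (e a) j * X j (e b)"]
        sum.reindex_bij_betw[OF f, of "\<lambda>j. A (e a) j * X j (e b)"]
      by (simp add: Pm_def Um_def scalar_prod_def atLeast0LessThan)
    also have "\<dots> = (\<Sum>j\<in>I \<union> J. A (e a) j * X j (e b))"
      by (rule sum.union_disjoint[OF I J disjoint, symmetric])
    finally show "(?Am * Pm + ?Bm * Um) $$ (a, b) = 1\<^sub>m n $$ (a, b)"
      using AX ab e_inj by simp
  qed (simp_all add: Pm_def Um_def)
  then show ?thesis
    by (intro ex_det_add_mult_ne_0) (simp_all add: Pm_def Um_def)
qed

lemma ex_det_block_ne_0:
  fixes A X :: "'i \<Rightarrow> 'i \<Rightarrow> 'a :: field_char_0"
  assumes J: "finite J" and disjoint: "I \<inter> J = {}" and e: "bij_betw e {0..<n} I"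
    and AX: "\<forall>i\<in>I \<union> J. \<forall>l\<in>I \<union> J. (\<Sum>j\<in>I \<union> J. A i j * X j l) = (if i = l then 1 else 0)"
  shows "\<exists>M. det (mat n n (\<lambda>(a, b). A (e a) (e b) + (\<Sum>j\<in>J. A (e a) j * M j (e b)))) \<noteq> 0"
proof -
  obtain f where f: "bij_betw f {0..<card J} J"
    using ex_bij_betw_nat_finite[OF J] by blast
  let ?k = "card J"
  obtain L where L: "L \<in> carrier_mat ?k n"
    and det: "det (mat n n (\<lambda>(a, b). A (e a) (e b)) + mat n ?k (\<lambda>(a, c). A (e a) (f c)) * L) \<noteq> 0"
    using ex_det_block_add_mult_ne_0[OF J disjoint e f AX] by blast
  define M where "M j i = L $$ (inv_into {0..<?k} f j, inv_into {0..<n} e i)" for j i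
  have "mat n n (\<lambda>(a, b). A (e a) (e b) + (\<Sum>j\<in>J. A (e a) j * M j (e b))) =
      mat n n (\<lambda>(a, b). A (e a) (e b)) + mat n ?k (\<lambda>(a, c). A (e a) (f c)) * L" (is "?lhs = ?rhs")
  proof (rule eq_matI)
    fix a b assume "a < dim_row ?rhs" "b < dim_col ?rhs"
    then have ab: "a < n" "b < n"
      using L by auto
    have "(\<Sum>c<?k. A (e a) (f c) * L $$ (c, b)) = (\<Sum>c<?k. A (e a) (f c) * M (f c) (e b))"
      using ab bij_betw_inv_into_left[OF f] bij_betw_inv_into_left[OF e] by (simp add: M_def)
    also have "\<dots> = (\<Sum>j\<in>J. A (e a) j * M j (e b))"
      using sum.reindex_bij_betw[OF f, of "\<lambda>j. A (e a) j * M j (e b)"] by (simp add: atLeast0LessThan)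
    finally show "?lhs $$ (a, b) = ?rhs $$ (a, b)"
      using ab L by (simp add: scalar_prod_def atLeast0LessThan)
  qed (use L in simp_all)
  with det show ?thesis
    by (intro exI[of _ M]) simp
qed

section \<open>Jacobian matrices at the origin\<close>

lemma const_coeff_partial_deriv_subst:
  assumes "finite V" and "vars p \<subseteq> V" and "\<And>v. const_coeff (s v) = 0"
  shows "const_coeff (partial_deriv l (subst s p)) =
    (\<Sum>v\<in>V. const_coeff (partial_deriv v p) * const_coeff (partial_deriv l (s v)))"
  using partial_deriv_subst[OF assms(1,2)]
  by (simp add: const_coeff.hom_sum const_coeff.hom_mult const_coeff_subst assms(3))

lemma jacobian_at_zero_right_invertible:
  assumes V: "finite V" and "endo_on V \<phi>" "endo_on V \<psi>" and right_inverse: "Defs.compose \<phi> \<psi> = Var"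
  shows "\<exists>X. \<forall>i\<in>V. \<forall>l\<in>V.
    (\<Sum>j\<in>V. const_coeff (partial_deriv j (\<phi> i)) * X j l) = (if i = l then 1 else 0)"
proof -
  define X where "X i j = const_coeff (subst \<phi> (partial_deriv j (\<psi> i)))" for i j
  have XA: "(\<Sum>j\<in>V. X i j * const_coeff (partial_deriv l (\<phi> j))) = (if i = l then 1 else 0)"
    if "i \<in> V" for i l
  proof -
    have "partial_deriv l (subst \<phi> (\<psi> i)) =
        (\<Sum>j\<in>V. subst \<phi> (partial_deriv j (\<psi> i)) * partial_deriv l (\<phi> j))"
      using assms(3) that by (intro partial_deriv_subst V) (auto simp: endo_on_def)
    then have "(\<Sum>j\<in>V. X i j * const_coeff (partial_deriv l (\<phi> j))) =
        const_coeff (partial_deriv l (subst \<phi> (\<psi> i)))"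
      by (simp add: X_def const_coeff.hom_sum const_coeff.hom_mult)
    also have "subst \<phi> (\<psi> i) = Var i"
      using fun_cong[OF right_inverse, of i] by (simp add: Defs.compose_def)
    finally show ?thesis
      by (simp add: partial_deriv_Var)
  qed
  show ?thesis
    by (rule exI[of _ X], rule right_inverse_if_left_inverse_on[OF V]) (simp add: XA)
qed

lemma const_coeff_jacobian_subst_linear:
  fixes M :: "nat \<Rightarrow> nat \<Rightarrow> complex" and I J :: "nat set"
  defines "s \<equiv> \<lambda>v. if v \<in> J then (\<Sum>i\<in>I. Const (M v i) * Var i) else Var v"
  assumes I: "finite I" and J: "finite J" and disjoint: "I \<inter> J = {}" and e: "bij_betw e {0..<n} I"
    and vars: "\<forall>i\<in>I. vars (\<phi> i) \<subseteq> I \<union> J"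
  shows "map_mat const_coeff (jacobian e n (\<lambda>i. subst s (\<phi> i))) =
    mat n n (\<lambda>(a, b). const_coeff (partial_deriv (e b) (\<phi> (e a))) +
      (\<Sum>j\<in>J. const_coeff (partial_deriv j (\<phi> (e a))) * M j (e b)))" (is "_ = ?rhs")
proof (rule eq_matI)
  fix a b assume "a < dim_row ?rhs" and "b < dim_col ?rhs"
  then have ab: "a < n" "b < n" "e a \<in> I" "e b \<in> I"
    using bij_betwE[OF e] by auto
  let ?A = "\<lambda>v. const_coeff (partial_deriv v (\<phi> (e a)))"
  have s_at_zero: "const_coeff (s v) = 0" for v
    by (simp add: s_def const_coeff.hom_sum const_coeff.hom_mult)
  have s_deriv: "const_coeff (partial_deriv (e b) (s v)) =
      (if v \<in> J then M v (e b) else if v = e b then 1 else 0)" for v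
    using I ab(4) by (simp add: s_def partial_deriv.hom_sum partial_deriv_mult partial_deriv_Var
        const_coeff.hom_sum const_coeff.hom_mult if_distrib[of const_coeff] if_distrib[of "times c" for c]
        cong: if_cong)
  have "const_coeff (partial_deriv (e b) (subst s (\<phi> (e a)))) =
      (\<Sum>v\<in>I \<union> J. ?A v * const_coeff (partial_deriv (e b) (s v)))"
    using I J vars ab(3) s_at_zero by (intro const_coeff_partial_deriv_subst) auto
  also have "\<dots> = (\<Sum>v\<in>I. ?A v * const_coeff (partial_deriv (e b) (s v))) +
      (\<Sum>v\<in>J. ?A v * const_coeff (partial_deriv (e b) (s v)))"
    by (rule sum.union_disjoint[OF I J disjoint])
  also have "(\<Sum>v\<in>I. ?A v * const_coeff (partial_deriv (e b) (s v))) =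
      (\<Sum>v\<in>I. if v = e b then ?A v else 0)"
    using disjoint by (intro sum.cong) (auto simp: s_deriv)
  also have "\<dots> = ?A (e b)"
    using I ab(4) by simp
  also have "(\<Sum>v\<in>J. ?A v * const_coeff (partial_deriv (e b) (s v))) = (\<Sum>v\<in>J. ?A v * M v (e b))"
    by (simp add: s_deriv)
  finally show "map_mat const_coeff (jacobian e n (\<lambda>i. subst s (\<phi> i))) $$ (a, b) = ?rhs $$ (a, b)"
    using ab by (simp add: jacobian_def)
qed (simp_all add: jacobian_def)

lemma ex_linear_subst_jacobian_det_ne_0:
  assumes I: "finite I" and J: "finite J" and disjoint: "I \<inter> J = {}" and e: "bij_betw e {0..<n} I"
    and "endo_on (I \<union> J) \<phi>" "endo_on (I \<union> J) \<psi>" and "Defs.compose \<phi> \<psi> = Var"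
  shows "\<exists>M. det (jacobian e n (\<lambda>i. subst
    (\<lambda>v. if v \<in> J then (\<Sum>i\<in>I. Const (M v i) * Var i) else Var v) (\<phi> i))) \<noteq> 0"
proof -
  obtain X where "\<forall>i\<in>I \<union> J. \<forall>l\<in>I \<union> J.
      (\<Sum>j\<in>I \<union> J. const_coeff (partial_deriv j (\<phi> i)) * X j l) = (if i = l then 1 else 0)"
    using jacobian_at_zero_right_invertible assms by blast
  then obtain M where M: "det (mat n n (\<lambda>(a, b). const_coeff (partial_deriv (e b) (\<phi> (e a))) +
      (\<Sum>j\<in>J. const_coeff (partial_deriv j (\<phi> (e a))) * M j (e b)))) \<noteq> 0"
    using ex_det_block_ne_0[OF J disjoint e, where A = "\<lambda>i j. const_coeff (partial_deriv j (\<phi> i))"]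
    by blast
  have "map_mat const_coeff (jacobian e n (\<lambda>i. subst
      (\<lambda>v. if v \<in> J then (\<Sum>i\<in>I. Const (M v i) * Var i) else Var v) (\<phi> i))) =
    mat n n (\<lambda>(a, b). const_coeff (partial_deriv (e b) (\<phi> (e a))) +
      (\<Sum>j\<in>J. const_coeff (partial_deriv j (\<phi> (e a))) * M j (e b)))"
    using \<open>endo_on (I \<union> J) \<phi>\<close>
    by (intro const_coeff_jacobian_subst_linear[OF I J disjoint e]) (simp add: endo_on_def)
  with M show ?thesis
    by (intro exI[of _ M]) (metis const_coeff.hom_det const_coeff.hom_zero)
qed

theorem proposition2p4:
  fixes n k :: nat and phi :: "nat \<Rightarrow> mpoly" and I J :: "nat set"
  assumes "n \<ge> 1" and "k \<ge> 1"
    and "tame (n + k) phi"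
    and "I \<union> J = {1..n+k}" and "I \<inter> J = {}" and "card I = n" and "card J = k"
  shows "\<exists>q :: nat \<Rightarrow> mpoly. (\<forall>j\<in>J. vars (q j) \<subseteq> I) \<and>
           inj_on (subst (\<lambda>i. subst (\<lambda>v. if v \<in> J then q v else Var v) (phi i)))
                  {p. vars p \<subseteq> I}"
proof -
  have I: "finite I" and J: "finite J"
    using assms(4) finite_subset[of _ "{1..n+k}"] by auto
  obtain e where e: "bij_betw e {0..<n} I"
    using ex_bij_betw_nat_finite[OF I] assms(6) by blast
  obtain \<psi> where "endo_on (I \<union> J) phi" "endo_on (I \<union> J) \<psi>" "Defs.compose phi \<psi> = Var"
    using tame_right_invertible[OF assms(3)] assms(4) by auto
  then obtain M where "det (jacobian e n (\<lambda>i. subst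
      (\<lambda>v. if v \<in> J then (\<Sum>i\<in>I. Const (M v i) * Var i) else Var v) (phi i))) \<noteq> 0"
    using ex_linear_subst_jacobian_det_ne_0[OF I J assms(5) e] by blast
  then have "inj_on (subst (\<lambda>i. subst
      (\<lambda>v. if v \<in> J then (\<Sum>i\<in>I. Const (M v i) * Var i) else Var v) (phi i))) {p. vars p \<subseteq> I}"
    by (rule jacobian_criterion[OF e])
  then show ?thesis
    using vars_linear_form by (intro exI[of _ "\<lambda>j. \<Sum>i\<in>I. Const (M j i) * Var i"]) simp
qed

end
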